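(* Let $(\mathbb{F}_i)_{i\ge0}$ be a filtration on $\mathcal{E}$ with ranges $\mathcal{F}_i$. (1) If $(P_i)_{i\ge0}$ is a stopping time, then there is $\tau\in\mathcal{E}^s$ with $\tau(K)\subseteq\{1,2,\dots\}\cup\{\infty\}$ such that $\{\tau=n\}$ is clopen and $\mathbf{1}_{\{\tau=n\}}\in\mathcal{F}_n$ for every $n\ge1$, and $P_nf=\mathbf{1}_{\{\tau\le n\}}f$ for all $f\in\mathcal{E}$ and $n\ge0$. (2) Conversely, if $\tau\in\mathcal{E}^s$ satisfies $\tau(K)\subseteq\{1,2,\dots\}\cup\{\infty\}$ and $\mathbf{1}_{\{\tau=n\}}\in\mathcal{F}_n$ for all $n\ge1$, then the operators $P_0=0$ and $P_nf=\mathbf{1}_{\{\tau\le n\}}f$ ($f\in\mathcal{E}$, $n\ge1$) form a stopping time.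
   Context: Let $\mathcal{E}$ be an order complete vector lattice with a weak order unit $E$, $K$ its Stone space (extremally disconnected compact Hausdorff), and $C^\infty(K)$ the vector lattice and f-algebra of continuous functions $K\to[-\infty,\infty]$ finite off a nowhere dense set (identified when equal off a nowhere dense set; operations pointwise), the universal completion of $\mathcal{E}$. Fix a Maeda–Ogasawara representation of $\mathcal{E}$ as an order dense ideal of $C^\infty(K)$ with $E$ corresponding to $\mathbf{1}$; band projections on $\mathcal{E}$ are exactly multiplications by $\mathbf{1}_W$ for clopen $W\subseteq K$. The sup-completion is $\mathcal{E}^s=\{f\in C(K,[-\infty,\infty]): f\ge g\text{ for some } g\in\mathcal{E}\}$. A conditional expectation on $\mathcal{E}$ is an order continuous, strictly positive linear projection $\mathbb{F}:\mathcal{E}\to\mathcal{E}$ whose range is an order complete vector sublattice of $\mathcal{E}$ and with $\mathbb{F}E=E$. A filtration is a family $(\mathbb{F}_i)_{i\ge0}$ of conditional expectations with $\mathbb{F}_s=\mathbb{F}_s\mathbb{F}_t=\mathbb{F}_t\mathbb{F}_s$ for $s\le t$; $\mathcal{F}_i$ is the range of $\mathbb{F}_i$. A stopping time (for this filtration) is an increasing sequence $(P_i)_{i\ge0}$ of band projections on $\mathcal{E}$ with $P_0=0$ and $\mathbb{F}_jP_i=P_i\mathbb{F}_j$ whenever $i\le j$. *)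

theory Defs
  imports "HOL-Analysis.Analysis"
begin

text \<open>Concrete Maeda--Ogasawara setting. Since K is extremally disconnected, two continuous functions
agreeing off a nowhere dense set agree everywhere, so no quotient is needed.\<close>

definition extremally_disconnected_space :: "'k::topological_space itself \<Rightarrow> bool" where
  "extremally_disconnected_space _ \<longleftrightarrow>
     compact (UNIV :: 'k set) \<and> (\<forall>U :: 'k set. open U \<longrightarrow> open (closure U))"

definition Cinf :: "('k::topological_space \<Rightarrow> ereal) set" where
  "Cinf = {f. continuous_on UNIV f \<and> interior {x. f x = \<infinity> \<or> f x = -\<infinity>} = {}}"

definition cadd :: "('k::topological_space \<Rightarrow> ereal) \<Rightarrow> ('k \<Rightarrow> ereal) \<Rightarrow> ('k \<Rightarrow> ereal)" where
  "cadd f g = (THE h. continuous_on UNIV h \<and>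
      (\<forall>x. f x \<noteq> \<infinity> \<and> f x \<noteq> -\<infinity> \<and> g x \<noteq> \<infinity> \<and> g x \<noteq> -\<infinity> \<longrightarrow> h x = f x + g x))"

definition cscale :: "real \<Rightarrow> ('k \<Rightarrow> ereal) \<Rightarrow> ('k \<Rightarrow> ereal)" where
  "cscale c f = (\<lambda>x. ereal c * f x)"

definition czero :: "'k \<Rightarrow> ereal" where "czero = (\<lambda>_. 0)"
definition cone :: "'k \<Rightarrow> ereal" where "cone = (\<lambda>_. 1)"

definition cind :: "'k set \<Rightarrow> ('k \<Rightarrow> ereal) \<Rightarrow> ('k \<Rightarrow> ereal)" where
  "cind W f = (\<lambda>x. indicator W x * f x)"

text \<open>E is an order dense ideal of C^infinity(K) containing the weak unit 1.\<close>
definition MO_space :: "('k::topological_space \<Rightarrow> ereal) set \<Rightarrow> bool" where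
  "MO_space E \<longleftrightarrow>
     E \<subseteq> Cinf \<and> cone \<in> E \<and> czero \<in> E \<and>
     (\<forall>f\<in>E. \<forall>g\<in>E. cadd f g \<in> E) \<and>
     (\<forall>c f. f \<in> E \<longrightarrow> cscale c f \<in> E) \<and>
     (\<forall>f\<in>E. \<forall>g\<in>Cinf. (\<forall>x. \<bar>g x\<bar> \<le> \<bar>f x\<bar>) \<longrightarrow> g \<in> E) \<and>
     (\<forall>g\<in>Cinf. czero \<le> g \<and> g \<noteq> czero \<longrightarrow> (\<exists>f\<in>E. czero \<le> f \<and> f \<noteq> czero \<and> f \<le> g))"

definition sup_completion :: "('k::topological_space \<Rightarrow> ereal) set \<Rightarrow> ('k \<Rightarrow> ereal) set" where
  "sup_completion E = {f. continuous_on UNIV f \<and> (\<exists>g\<in>E. g \<le> f)}"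

definition glb_in :: "('k \<Rightarrow> ereal) set \<Rightarrow> ('k \<Rightarrow> ereal) set \<Rightarrow> ('k \<Rightarrow> ereal) \<Rightarrow> bool" where
  "glb_in R S a \<longleftrightarrow> a \<in> R \<and> (\<forall>s\<in>S. a \<le> s) \<and> (\<forall>b\<in>R. (\<forall>s\<in>S. b \<le> s) \<longrightarrow> b \<le> a)"

definition lub_in :: "('k \<Rightarrow> ereal) set \<Rightarrow> ('k \<Rightarrow> ereal) set \<Rightarrow> ('k \<Rightarrow> ereal) \<Rightarrow> bool" where
  "lub_in R S a \<longleftrightarrow> a \<in> R \<and> (\<forall>s\<in>S. s \<le> a) \<and> (\<forall>b\<in>R. (\<forall>s\<in>S. s \<le> b) \<longrightarrow> a \<le> b)"

definition down_directed :: "('k \<Rightarrow> ereal) set \<Rightarrow> bool" where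
  "down_directed D \<longleftrightarrow> D \<noteq> {} \<and> (\<forall>a\<in>D. \<forall>b\<in>D. \<exists>c\<in>D. c \<le> a \<and> c \<le> b)"

definition order_continuous_on :: "('k \<Rightarrow> ereal) set \<Rightarrow> (('k \<Rightarrow> ereal) \<Rightarrow> ('k \<Rightarrow> ereal)) \<Rightarrow> bool" where
  "order_continuous_on E T \<longleftrightarrow>
     (\<forall>D. D \<subseteq> E \<and> down_directed D \<and> glb_in E D czero \<longrightarrow> glb_in E (T ` D) czero)"

definition cond_exp :: "('k::topological_space \<Rightarrow> ereal) set \<Rightarrow> (('k \<Rightarrow> ereal) \<Rightarrow> ('k \<Rightarrow> ereal)) \<Rightarrow> bool" where
  "cond_exp E T \<longleftrightarrow>
     (\<forall>f\<in>E. T f \<in> E) \<and>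
     (\<forall>f\<in>E. \<forall>g\<in>E. T (cadd f g) = cadd (T f) (T g)) \<and>
     (\<forall>c. \<forall>f\<in>E. T (cscale c f) = cscale c (T f)) \<and>
     (\<forall>f\<in>E. czero \<le> f \<and> f \<noteq> czero \<longrightarrow> czero \<le> T f \<and> T f \<noteq> czero) \<and>
     (\<forall>f\<in>E. T (T f) = T f) \<and>
     order_continuous_on E T \<and>
     (\<forall>f\<in>T ` E. \<forall>g\<in>T ` E. sup f g \<in> T ` E \<and> inf f g \<in> T ` E) \<and>
     (\<forall>S. S \<subseteq> T ` E \<and> S \<noteq> {} \<and> (\<exists>b\<in>T ` E. \<forall>s\<in>S. s \<le> b) \<longrightarrow> (\<exists>a. lub_in (T ` E) S a)) \<and>
     T cone = cone"

definition filtration :: "('k::topological_space \<Rightarrow> ereal) set \<Rightarrow> (nat \<Rightarrow> ('k \<Rightarrow> ereal) \<Rightarrow> ('k \<Rightarrow> ereal)) \<Rightarrow> bool" where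
  "filtration E F \<longleftrightarrow> (\<forall>i. cond_exp E (F i)) \<and>
     (\<forall>s t f. s \<le> t \<and> f \<in> E \<longrightarrow> F s f = F s (F t f) \<and> F s f = F t (F s f))"

text \<open>Band projections on E are exactly multiplications by indicators of clopen sets.\<close>
definition band_projection :: "('k::topological_space \<Rightarrow> ereal) set \<Rightarrow> (('k \<Rightarrow> ereal) \<Rightarrow> ('k \<Rightarrow> ereal)) \<Rightarrow> bool" where
  "band_projection E P \<longleftrightarrow> (\<exists>W. open W \<and> closed W \<and> (\<forall>f\<in>E. P f = cind W f))"

definition stopping_time :: "('k::topological_space \<Rightarrow> ereal) set \<Rightarrow> (nat \<Rightarrow> ('k \<Rightarrow> ereal) \<Rightarrow> ('k \<Rightarrow> ereal))
     \<Rightarrow> (nat \<Rightarrow> ('k \<Rightarrow> ereal) \<Rightarrow> ('k \<Rightarrow> ereal)) \<Rightarrow> bool" where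
  "stopping_time E F P \<longleftrightarrow>
     (\<forall>i. band_projection E (P i)) \<and>
     (\<forall>i j f. i \<le> j \<and> f \<in> E \<and> czero \<le> f \<longrightarrow> P i f \<le> P j f) \<and>
     (\<forall>f\<in>E. P 0 f = czero) \<and>
     (\<forall>i j f. i \<le> j \<and> f \<in> E \<longrightarrow> F j (P i f) = P i (F j f))"

end

theory Submission
  imports Defs
begin

text \<open>A band projection is multiplication by \<open>\<one>\<^sub>W\<close> for a clopen \<open>W\<close>, so a stopping time is an
increasing sequence of clopen sets \<open>W\<^sub>n\<close> with \<open>W\<^sub>0 = {}\<close>, and \<open>\<tau>\<close> is its first entry time:
\<open>{\<tau> \<le> n} = W\<^sub>n\<close>, so \<open>\<tau>\<close> is continuous, and \<open>\<one>\<^bsub>{\<tau> = n}\<^esub> = \<one>\<^bsub>W\<^sub>n\<^esub> - \<one>\<^bsub>W\<^sub>n\<^sub>-\<^sub>1\<^esub>\<close> is fixed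
by \<open>F\<^sub>n\<close> because \<open>F\<^sub>n P\<^sub>k \<one> = P\<^sub>k F\<^sub>n \<one> = P\<^sub>k \<one>\<close> for \<open>k \<le> n\<close>.

Conversely, the sets \<open>{\<tau> \<le> n}\<close> are clopen with indicators fixed by \<open>F\<^sub>j\<close> (\<open>j \<ge> n\<close>), and the
point is that a conditional expectation \<open>T\<close> fixing \<open>\<one>\<^sub>W\<close> commutes with multiplication
by \<open>\<one>\<^sub>W\<close>. It suffices that \<open>T g\<close> vanishes off \<open>W\<close> when \<open>g\<close> does. For \<open>0 \<le> g \<le> c \<one>\<^sub>W\<close>
this follows from positivity and \<open>T (c \<one>\<^sub>W) = c \<one>\<^sub>W\<close>; a general \<open>g \<ge> 0\<close> is \<open>min g m\<close> plus an
excess decreasing to \<open>0\<close>, handled by order continuity; signed \<open>g\<close> follow by linearity,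
which requires the pointwise description of addition in \<open>C\<^sup>\<infinity>(K)\<close>: a continuous function on a
dense open subset of an extremally disconnected space extends continuously.\<close>

section \<open>Topological preliminaries\<close>

lemma continuous_on_UNIV_orderI:
  fixes f :: "'a::topological_space \<Rightarrow> 'b::linorder_topology"
  assumes "\<And>a. open {x. f x < a}" "\<And>a. open {x. a < f x}"
  shows "continuous_on UNIV f"
proof (rule continuous_on_generate_topology[OF open_generated_order])
  fix B :: "'b set" assume "B \<in> range lessThan \<union> range greaterThan"
  then show "\<exists>C. open C \<and> C \<inter> UNIV = f -` B \<inter> UNIV"
  proof
    assume "B \<in> range lessThan" then obtain a where "B = {..<a}" by auto
    then show ?thesis using assms(1)[of a] by (intro exI[of _ "{x. f x < a}"]) auto
  next
    assume "B \<in> range greaterThan" then obtain a where "B = {a<..}" by auto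
    then show ?thesis using assms(2)[of a] by (intro exI[of _ "{x. a < f x}"]) auto
  qed
qed

lemma continuous_eq_on_dense:
  fixes f g :: "'a::topological_space \<Rightarrow> 'b::t2_space"
  assumes "continuous_on UNIV f" "continuous_on UNIV g" "closure D = UNIV"
    and "\<And>x. x \<in> D \<Longrightarrow> f x = g x"
  shows "f = g"
proof -
  have "closure D \<subseteq> {x. f x = g x}"
    using assms(4) by (intro closure_minimal closed_Collect_eq[OF assms(1,2)]) auto
  then show ?thesis using assms(3) by auto
qed

lemma continuous_le_on_dense:
  fixes f g :: "'a::topological_space \<Rightarrow> 'b::linorder_topology"
  assumes "continuous_on UNIV f" "continuous_on UNIV g" "closure D = UNIV"
    and "\<And>x. x \<in> D \<Longrightarrow> f x \<le> g x"
  shows "f \<le> g"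
proof -
  have "closure D \<subseteq> {x. f x \<le> g x}"
    using assms(4) by (intro closure_minimal closed_Collect_le[OF assms(1,2)]) auto
  then show ?thesis using assms(3) by (auto simp: le_fun_def)
qed

lemma closure_Int_open_dense:
  assumes "open A" "closure A = UNIV" "closure B = UNIV"
  shows "closure (A \<inter> B) = UNIV"
proof -
  have "A \<subseteq> closure (A \<inter> B)" using open_Int_closure_subset[OF assms(1), of B] assms(3) by auto
  then have "closure A \<subseteq> closure (A \<inter> B)" by (simp add: closure_minimal)
  then show ?thesis using assms(2) by auto
qed

lemma continuous_on_If_clopen:
  assumes "open W" "closed W" "continuous_on UNIV f" "continuous_on UNIV g"
  shows "continuous_on UNIV (\<lambda>x. if x \<in> W then f x else g x)"
proof -
  have "continuous_on (W \<union> -W) (\<lambda>x. if x \<in> W then f x else g x)"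
    by (rule continuous_on_If) (use assms in \<open>auto intro: continuous_on_subset\<close>)
  then show ?thesis by (simp add: Un_commute)
qed

text \<open>Stone's extension: in an extremally disconnected space the closures of the strict
sublevel sets of \<open>\<phi>\<close> on \<open>U\<close> are clopen, and they are the sublevel sets of the extension.\<close>

definition sublevel_extension :: "'a::topological_space set \<Rightarrow> ('a \<Rightarrow> ereal) \<Rightarrow> 'a \<Rightarrow> ereal" where
  "sublevel_extension U \<phi> x = Inf {ereal r | r. x \<in> closure {y\<in>U. \<phi> y < ereal r}}"

lemma sublevel_extension_le:
  "x \<in> closure {y\<in>U. \<phi> y < ereal r} \<Longrightarrow> sublevel_extension U \<phi> x \<le> ereal r"
  unfolding sublevel_extension_def by (intro Inf_lower) auto

lemma sublevel_extension_less_iff: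
  "sublevel_extension U \<phi> x < a \<longleftrightarrow> (\<exists>r. ereal r < a \<and> x \<in> closure {y\<in>U. \<phi> y < ereal r})"
proof
  assume "sublevel_extension U \<phi> x < a"
  then show "\<exists>r. ereal r < a \<and> x \<in> closure {y\<in>U. \<phi> y < ereal r}"
    unfolding sublevel_extension_def by (auto simp: Inf_less_iff)
next
  assume "\<exists>r. ereal r < a \<and> x \<in> closure {y\<in>U. \<phi> y < ereal r}"
  then obtain r where "ereal r < a" "x \<in> closure {y\<in>U. \<phi> y < ereal r}" by blast
  then show "sublevel_extension U \<phi> x < a"
    using le_less_trans[OF sublevel_extension_le] by blast
qed

lemma sublevel_extension_greater_iff:
  "a < sublevel_extension U \<phi> x \<longleftrightarrow> (\<exists>s. a < ereal s \<and> x \<notin> closure {y\<in>U. \<phi> y < ereal s})"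
proof
  assume "a < sublevel_extension U \<phi> x"
  then obtain s where "a < ereal s" "ereal s < sublevel_extension U \<phi> x" using ereal_dense2 by blast
  then show "\<exists>s. a < ereal s \<and> x \<notin> closure {y\<in>U. \<phi> y < ereal s}"
    using sublevel_extension_le[of x U \<phi> s] by auto
next
  assume "\<exists>s. a < ereal s \<and> x \<notin> closure {y\<in>U. \<phi> y < ereal s}"
  then obtain s where s: "a < ereal s" "x \<notin> closure {y\<in>U. \<phi> y < ereal s}" by auto
  have "ereal s \<le> sublevel_extension U \<phi> x" unfolding sublevel_extension_def
  proof (rule Inf_greatest)
    fix z assume "z \<in> {ereal r | r. x \<in> closure {y\<in>U. \<phi> y < ereal r}}"
    then obtain r where r: "z = ereal r" "x \<in> closure {y\<in>U. \<phi> y < ereal r}" by auto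
    show "ereal s \<le> z"
    proof (rule ccontr)
      assume "\<not> ereal s \<le> z"
      then have "{y\<in>U. \<phi> y < ereal r} \<subseteq> {y\<in>U. \<phi> y < ereal s}"
        using r(1) by (auto simp: not_le intro: order.strict_trans)
      then have "x \<in> closure {y\<in>U. \<phi> y < ereal s}" using r(2) closure_mono by blast
      then show False using s(2) by contradiction
    qed
  qed
  then show "a < sublevel_extension U \<phi> x" using s(1) by auto
qed

lemma continuous_on_sublevel_extension:
  fixes \<phi> :: "'a::topological_space \<Rightarrow> ereal"
  assumes K: "extremally_disconnected_space TYPE('a)"
    and U: "open U" and \<phi>: "continuous_on U \<phi>"
  shows "continuous_on UNIV (sublevel_extension U \<phi>)"
proof (rule continuous_on_UNIV_orderI)
  have "open (closure {y\<in>U. \<phi> y < ereal r})" for r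
  proof -
    have "open (U \<inter> \<phi> -` {..<ereal r})" by (rule continuous_open_preimage[OF \<phi> U]) auto
    moreover have "U \<inter> \<phi> -` {..<ereal r} = {y\<in>U. \<phi> y < ereal r}" by auto
    ultimately show ?thesis using K unfolding extremally_disconnected_space_def by auto
  qed
  then have "open (\<Union>r\<in>{r. ereal r < a}. closure {y\<in>U. \<phi> y < ereal r})" for a
    by (intro open_UN ballI)
  moreover have "{x. sublevel_extension U \<phi> x < a} = (\<Union>r\<in>{r. ereal r < a}. closure {y\<in>U. \<phi> y < ereal r})" for a
    by (auto simp: sublevel_extension_less_iff)
  ultimately show "open {x. sublevel_extension U \<phi> x < a}" for a
    by simp
  have "open (\<Union>s\<in>{s. a < ereal s}. - closure {y\<in>U. \<phi> y < ereal s})" for a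
    by (intro open_UN ballI open_Compl closed_closure)
  moreover have "{x. a < sublevel_extension U \<phi> x} = (\<Union>s\<in>{s. a < ereal s}. - closure {y\<in>U. \<phi> y < ereal s})" for a
    by (auto simp: sublevel_extension_greater_iff)
  ultimately show "open {x. a < sublevel_extension U \<phi> x}" for a
    by simp
qed

lemma sublevel_extension_eq:
  fixes \<phi> :: "'a::topological_space \<Rightarrow> ereal"
  assumes U: "open U" and \<phi>: "continuous_on U \<phi>" and x: "x \<in> U"
  shows "sublevel_extension U \<phi> x = \<phi> x"
proof (rule antisym)
  show "sublevel_extension U \<phi> x \<le> \<phi> x"
  proof (rule ccontr)
    assume "\<not> sublevel_extension U \<phi> x \<le> \<phi> x"
    then have "\<phi> x < sublevel_extension U \<phi> x" by simp
    then obtain r where r: "\<phi> x < ereal r" "ereal r < sublevel_extension U \<phi> x"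
      using ereal_dense2 by blast
    have "x \<in> {y\<in>U. \<phi> y < ereal r}" using x r(1) by simp
    then have "x \<in> closure {y\<in>U. \<phi> y < ereal r}" by (rule closure_subset[THEN subsetD])
    then show False using r(2) sublevel_extension_le[of x U \<phi> r] by simp
  qed
  show "\<phi> x \<le> sublevel_extension U \<phi> x"
  proof (rule ccontr)
    assume "\<not> \<phi> x \<le> sublevel_extension U \<phi> x"
    then obtain r where r: "ereal r < \<phi> x" "x \<in> closure {y\<in>U. \<phi> y < ereal r}"
      using sublevel_extension_less_iff[of U \<phi> x "\<phi> x"] by auto
    define N where "N = U \<inter> \<phi> -` {ereal r<..}"
    have "open N" unfolding N_def by (rule continuous_open_preimage[OF \<phi> U]) simp
    moreover have "N \<inter> {y\<in>U. \<phi> y < ereal r} = {}" unfolding N_def by auto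
    ultimately have "N \<inter> closure {y\<in>U. \<phi> y < ereal r} = {}" by (simp add: open_Int_closure_eq_empty)
    moreover have "x \<in> N" unfolding N_def using x r(1) by simp
    ultimately show False using r(2) by blast
  qed
qed

section \<open>Addition in \<open>C\<^sup>\<infinity>(K)\<close>\<close>

lemma Cinf_continuous: "f \<in> Cinf \<Longrightarrow> continuous_on UNIV f"
  by (simp add: Cinf_def)

lemma open_Cinf_finite:
  assumes "f \<in> Cinf"
  shows "open {x. \<bar>f x\<bar> \<noteq> \<infinity>}"
proof -
  have "{x. \<bar>f x\<bar> \<noteq> \<infinity>} = f -` {-\<infinity><..<\<infinity>}"
    by (auto simp: abs_neq_infinity_cases)
  then show ?thesis using open_vimage[OF _ Cinf_continuous[OF assms], of "{-\<infinity><..<\<infinity>}"] by auto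
qed

lemma closure_Cinf_finite:
  assumes "f \<in> Cinf"
  shows "closure {x. \<bar>f x\<bar> \<noteq> \<infinity>} = UNIV"
proof -
  have "{x. \<bar>f x\<bar> \<noteq> \<infinity>} = - {x. f x = \<infinity> \<or> f x = -\<infinity>}" by auto
  then show ?thesis using assms by (simp add: Cinf_def closure_complement)
qed

lemma Cinf_common_finite:
  assumes "f \<in> Cinf" "g \<in> Cinf"
  shows "open {x. \<bar>f x\<bar> \<noteq> \<infinity> \<and> \<bar>g x\<bar> \<noteq> \<infinity>}"
    and "closure {x. \<bar>f x\<bar> \<noteq> \<infinity> \<and> \<bar>g x\<bar> \<noteq> \<infinity>} = UNIV"
proof -
  have eq: "{x. \<bar>f x\<bar> \<noteq> \<infinity> \<and> \<bar>g x\<bar> \<noteq> \<infinity>} = {x. \<bar>f x\<bar> \<noteq> \<infinity>} \<inter> {x. \<bar>g x\<bar> \<noteq> \<infinity>}"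
    by auto
  show "open {x. \<bar>f x\<bar> \<noteq> \<infinity> \<and> \<bar>g x\<bar> \<noteq> \<infinity>}"
    unfolding eq using assms by (intro open_Int open_Cinf_finite)
  show "closure {x. \<bar>f x\<bar> \<noteq> \<infinity> \<and> \<bar>g x\<bar> \<noteq> \<infinity>} = UNIV"
    unfolding eq using assms by (intro closure_Int_open_dense open_Cinf_finite closure_Cinf_finite)
qed

lemma Cinf_finiteI:
  assumes "continuous_on UNIV f" "\<And>x. \<bar>f x\<bar> \<noteq> \<infinity>"
  shows "f \<in> Cinf"
proof -
  have "f x \<noteq> \<infinity> \<and> f x \<noteq> -\<infinity>" for x using assms(2)[of x] by auto
  then have "{x. f x = \<infinity> \<or> f x = -\<infinity>} = {}" by simp
  then show ?thesis using assms(1) by (simp add: Cinf_def)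
qed

lemma Cinf_finite_whereI:
  assumes "continuous_on UNIV f" "g \<in> Cinf" "\<And>x. \<bar>g x\<bar> \<noteq> \<infinity> \<Longrightarrow> \<bar>f x\<bar> \<noteq> \<infinity>"
  shows "f \<in> Cinf"
proof -
  have "{x. f x = \<infinity> \<or> f x = -\<infinity>} \<subseteq> {x. g x = \<infinity> \<or> g x = -\<infinity>}"
    using assms(3) by force
  then have "interior {x. f x = \<infinity> \<or> f x = -\<infinity>} \<subseteq> interior {x. g x = \<infinity> \<or> g x = -\<infinity>}"
    by (rule interior_mono)
  then show ?thesis using assms by (auto simp: Cinf_def)
qed

text \<open>Uniqueness in the definition of \<open>cadd\<close> holds because the points where both
summands are finite form a dense set.\<close>

lemma cadd_eqI:
  assumes "f \<in> Cinf" "g \<in> Cinf" "continuous_on UNIV h"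
    and "\<And>x. \<bar>f x\<bar> \<noteq> \<infinity> \<Longrightarrow> \<bar>g x\<bar> \<noteq> \<infinity> \<Longrightarrow> h x = f x + g x"
  shows "cadd f g = h"
  unfolding cadd_def
proof (rule the_equality)
  show "continuous_on UNIV h \<and> (\<forall>x. f x \<noteq> \<infinity> \<and> f x \<noteq> - \<infinity> \<and> g x \<noteq> \<infinity> \<and> g x \<noteq> - \<infinity> \<longrightarrow> h x = f x + g x)"
    using assms(3,4) by auto
next
  fix h' assume h': "continuous_on UNIV h' \<and>
    (\<forall>x. f x \<noteq> \<infinity> \<and> f x \<noteq> - \<infinity> \<and> g x \<noteq> \<infinity> \<and> g x \<noteq> - \<infinity> \<longrightarrow> h' x = f x + g x)"
  show "h' = h"
    by (rule continuous_eq_on_dense[OF _ assms(3) Cinf_common_finite(2)[OF assms(1,2)]])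
       (use h' assms(4) in auto)
qed

lemma
  assumes K: "extremally_disconnected_space TYPE('a::topological_space)"
    and f: "f \<in> Cinf" and g: "(g :: 'a \<Rightarrow> ereal) \<in> Cinf"
  shows continuous_on_cadd: "continuous_on UNIV (cadd f g)"
    and cadd_apply: "\<bar>f x\<bar> \<noteq> \<infinity> \<Longrightarrow> \<bar>g x\<bar> \<noteq> \<infinity> \<Longrightarrow> cadd f g x = f x + g x"
proof -
  let ?U = "{x. \<bar>f x\<bar> \<noteq> \<infinity> \<and> \<bar>g x\<bar> \<noteq> \<infinity>}"
  have "continuous_on ?U (\<lambda>x. f x + g x)"
    unfolding continuous_on_def
  proof
    fix x assume x: "x \<in> ?U"
    have "(f \<longlongrightarrow> f x) (at x within ?U)" "(g \<longlongrightarrow> g x) (at x within ?U)"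
      using continuous_on_subset[OF Cinf_continuous[OF f], of ?U]
        continuous_on_subset[OF Cinf_continuous[OF g], of ?U] x
      by (auto simp: continuous_on_def)
    then show "((\<lambda>x. f x + g x) \<longlongrightarrow> f x + g x) (at x within ?U)"
      using x by (intro tendsto_add_ereal) auto
  qed
  define h where "h = sublevel_extension ?U (\<lambda>x. f x + g x)"
  have U: "open ?U" by (rule Cinf_common_finite(1)[OF f g])
  have h: "continuous_on UNIV h" "\<And>x. x \<in> ?U \<Longrightarrow> h x = f x + g x"
    unfolding h_def using \<open>continuous_on ?U _\<close>
    by (simp_all add: continuous_on_sublevel_extension[OF K U] sublevel_extension_eq[OF U])
  have "cadd f g = h"
    using h by (intro cadd_eqI f g) auto
  then show "continuous_on UNIV (cadd f g)"
    and "\<bar>f x\<bar> \<noteq> \<infinity> \<Longrightarrow> \<bar>g x\<bar> \<noteq> \<infinity> \<Longrightarrow> cadd f g x = f x + g x"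
    using h by auto
qed

lemma cadd_nonneg:
  assumes "f \<in> Cinf" "g \<in> Cinf" "\<And>x. 0 \<le> f x" "\<And>x. 0 \<le> g x"
  shows "cadd f g = (\<lambda>x. f x + g x)"
proof (rule cadd_eqI[OF assms(1,2)])
  have "f x \<noteq> -\<infinity>" "g x \<noteq> -\<infinity>" for x
    using assms(3,4)[of x] by auto
  then show "continuous_on UNIV (\<lambda>x. f x + g x)"
    using Cinf_continuous[OF assms(1)] Cinf_continuous[OF assms(2)]
    unfolding continuous_on_def by (auto intro!: tendsto_add_ereal_nonneg)
qed auto

lemma cind_If: "cind W f = (\<lambda>x. if x \<in> W then f x else 0)"
  by (auto simp: cind_def fun_eq_iff)

lemma continuous_on_cind:
  assumes "open W" "closed W" "continuous_on UNIV f"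
  shows "continuous_on UNIV (cind W f)"
  unfolding cind_If by (rule continuous_on_If_clopen[OF assms]) auto

lemma continuous_on_indicator_clopen:
  assumes "open W" "closed W"
  shows "continuous_on UNIV (indicator W :: 'a::topological_space \<Rightarrow> ereal)"
proof -
  have "(indicator W :: 'a \<Rightarrow> ereal) = (\<lambda>x. if x \<in> W then 1 else 0)"
    by (auto simp: fun_eq_iff)
  then show ?thesis using continuous_on_If_clopen[OF assms, of "\<lambda>_. 1" "\<lambda>_. 0"] by simp
qed

section \<open>Conditional expectations and band projections\<close>

locale conditional_expectation =
  fixes E :: "('a::t2_space \<Rightarrow> ereal) set" and T :: "('a \<Rightarrow> ereal) \<Rightarrow> ('a \<Rightarrow> ereal)"
  assumes MO_space: "MO_space E" and cond_exp: "cond_exp E T"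
begin

lemma in_Cinf: "f \<in> E \<Longrightarrow> f \<in> Cinf"
  using MO_space by (auto simp: MO_space_def)

lemma cone_in_E: "cone \<in> E"
  using MO_space by (auto simp: MO_space_def)

lemma czero_in_E: "czero \<in> E"
  using MO_space by (auto simp: MO_space_def)

lemma cscale_in_E: "f \<in> E \<Longrightarrow> cscale c f \<in> E"
  using MO_space by (auto simp: MO_space_def)

lemma in_E_if_dominated: "f \<in> E \<Longrightarrow> g \<in> Cinf \<Longrightarrow> (\<And>x. \<bar>g x\<bar> \<le> \<bar>f x\<bar>) \<Longrightarrow> g \<in> E"
  using MO_space unfolding MO_space_def by blast

lemma T_in_E: "f \<in> E \<Longrightarrow> T f \<in> E"
  using cond_exp by (auto simp: cond_exp_def)

lemma T_cadd: "f \<in> E \<Longrightarrow> g \<in> E \<Longrightarrow> T (cadd f g) = cadd (T f) (T g)"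
  using cond_exp by (auto simp: cond_exp_def)

lemma T_cscale: "f \<in> E \<Longrightarrow> T (cscale c f) = cscale c (T f)"
  using cond_exp by (auto simp: cond_exp_def)

lemma T_cone: "T cone = cone"
  using cond_exp by (auto simp: cond_exp_def)

lemma T_order_continuous: "order_continuous_on E T"
  using cond_exp by (auto simp: cond_exp_def)

lemma T_czero: "T czero = czero"
proof -
  have "cscale 0 cone = czero" by (simp add: cscale_def czero_def cone_def fun_eq_iff)
  then show ?thesis using T_cscale[OF cone_in_E, of 0] T_cone by metis
qed

lemma T_nonneg: "f \<in> E \<Longrightarrow> (\<And>x. 0 \<le> f x) \<Longrightarrow> 0 \<le> T f x"
  using cond_exp T_czero by (cases "f = czero") (auto simp: cond_exp_def czero_def le_fun_def)

lemma T_add_nonneg: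
  assumes "f \<in> E" "g \<in> E" "\<And>x. 0 \<le> f x" "\<And>x. 0 \<le> g x"
  shows "T (\<lambda>x. f x + g x) = (\<lambda>x. T f x + T g x)"
proof -
  have "T (\<lambda>x. f x + g x) = cadd (T f) (T g)"
    using T_cadd[OF assms(1,2)] cadd_nonneg[OF in_Cinf[OF assms(1)] in_Cinf[OF assms(2)] assms(3,4)]
    by simp
  also have "\<dots> = (\<lambda>x. T f x + T g x)"
    using assms by (intro cadd_nonneg in_Cinf T_in_E T_nonneg)
  finally show ?thesis .
qed

lemma indicator_in_E:
  assumes "open W" "closed W"
  shows "(indicator W :: 'a \<Rightarrow> ereal) \<in> E"
  by (rule in_E_if_dominated[OF cone_in_E Cinf_finiteI[OF continuous_on_indicator_clopen[OF assms]]])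
     (auto simp: cone_def indicator_def)

lemma cind_in_E:
  assumes "open W" "closed W" "f \<in> E"
  shows "cind W f \<in> E"
proof (rule in_E_if_dominated[OF assms(3)])
  have "continuous_on UNIV (cind W f)"
    using assms by (intro continuous_on_cind Cinf_continuous in_Cinf)
  then show "cind W f \<in> Cinf"
    by (rule Cinf_finite_whereI[OF _ in_Cinf[OF assms(3)]]) (auto simp: cind_If)
qed (auto simp: cind_If)

end

definition excess :: "('a \<Rightarrow> ereal) \<Rightarrow> nat \<Rightarrow> 'a \<Rightarrow> ereal" where
  "excess g m x = max (g x) (ereal (real m)) + ereal (- real m)"

lemma excess_nonneg: "0 \<le> excess g m x"
  by (cases "g x") (auto simp: excess_def max_def)

lemma excess_antimono: "m \<le> n \<Longrightarrow> excess g n x \<le> excess g m x"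
  by (cases "g x") (auto simp: excess_def max_def)

lemma min_add_excess: "0 \<le> g x \<Longrightarrow> min (g x) (ereal (real m)) + excess g m x = g x"
  by (cases "g x") (auto simp: excess_def min_def max_def)

lemma excess_eq_0:
  assumes "g x = ereal r" "r \<le> real m"
  shows "excess g m x = 0"
  using assms by (simp add: excess_def)

lemma continuous_on_excess:
  assumes "continuous_on UNIV g"
  shows "continuous_on UNIV (excess g m)"
proof -
  have "continuous_on UNIV (\<lambda>x. max (g x) (ereal (real m)))"
    by (intro continuous_on_max assms continuous_on_const)
  moreover have "max (g x) (ereal (real m)) \<noteq> -\<infinity>" for x
    by (auto simp: max_def)
  ultimately show ?thesis
    unfolding excess_def continuous_on_def by (auto intro!: tendsto_cadd_ereal)
qed

context conditional_expectation
begin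

lemma excess_in_E:
  assumes "g \<in> E"
  shows "excess g m \<in> E"
proof (rule in_E_if_dominated[OF assms Cinf_finite_whereI])
  show "continuous_on UNIV (excess g m)"
    using assms by (intro continuous_on_excess Cinf_continuous in_Cinf)
  show "g \<in> Cinf" using assms by (rule in_Cinf)
  show "\<bar>g x\<bar> \<noteq> \<infinity> \<Longrightarrow> \<bar>excess g m x\<bar> \<noteq> \<infinity>" for x
    by (cases "g x") (auto simp: excess_def max_def)
  show "\<bar>excess g m x\<bar> \<le> \<bar>g x\<bar>" for x
    by (cases "g x") (auto simp: excess_def max_def)
qed

lemma glb_T_excess:
  assumes g: "g \<in> E"
  shows "glb_in E (T ` range (excess g)) czero"
proof -
  have "down_directed (range (excess g))"
    unfolding down_directed_def
  proof (intro conjI ballI)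
    fix a b assume "a \<in> range (excess g)" "b \<in> range (excess g)"
    then obtain i j where "a = excess g i" "b = excess g j" by auto
    then show "\<exists>c\<in>range (excess g). c \<le> a \<and> c \<le> b"
      by (intro bexI[of _ "excess g (max i j)"]) (auto simp: le_fun_def intro: excess_antimono)
  qed simp
  moreover have "glb_in E (range (excess g)) czero"
    unfolding glb_in_def
  proof (intro conjI ballI impI)
    fix b assume b: "b \<in> E" "\<forall>s\<in>range (excess g). b \<le> s"
    show "b \<le> czero"
    proof (rule continuous_le_on_dense[OF _ _ closure_Cinf_finite[OF in_Cinf[OF g]]])
      fix x assume "x \<in> {x. \<bar>g x\<bar> \<noteq> \<infinity>}"
      then obtain r where r: "g x = ereal r" by auto
      have "b x \<le> excess g (nat \<lceil>r\<rceil>) x" using b(2) by (auto simp: le_fun_def)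
      also have "\<dots> = 0" by (rule excess_eq_0[of g x r, OF r]) linarith
      finally show "b x \<le> czero x" by (simp add: czero_def)
    qed (use b(1) in_Cinf Cinf_continuous in \<open>auto simp: czero_def\<close>)
  qed (use czero_in_E in \<open>auto simp: czero_def le_fun_def excess_nonneg\<close>)
  ultimately show ?thesis
    using T_order_continuous excess_in_E[OF g] unfolding order_continuous_on_def by blast
qed

lemma T_vanishes_off_bounded:
  assumes W: "open W" "closed W" "T (indicator W) = indicator W"
    and g: "g \<in> E" "\<And>x. 0 \<le> g x" "\<And>x. g x \<le> ereal c" "\<And>x. x \<notin> W \<Longrightarrow> g x = 0"
    and x0: "x0 \<notin> W"
  shows "T g x0 = 0"
proof -
  define y where "y x = ereal c * indicator W x - g x" for x
  have g_finite: "\<bar>g x\<bar> \<noteq> \<infinity>" for x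
    using g(2,3)[of x] by (cases "g x") auto
  have y_nonneg: "0 \<le> y x" for x
    using g(3,4)[of x] g_finite[of x] by (cases "g x") (auto simp: y_def indicator_def)
  have sum: "g x + y x = ereal c * indicator W x" for x
    using g_finite[of x] by (cases "g x") (auto simp: y_def indicator_def)
  have "continuous_on UNIV y" unfolding y_def
    using g_finite by (intro continuous_on_diff_ereal continuous_on_cmult_ereal
        continuous_on_indicator_clopen W(1,2) Cinf_continuous in_Cinf g(1)) (auto simp: indicator_def)
  moreover have "\<bar>y x\<bar> \<le> \<bar>cscale c cone x\<bar>" for x
    using g(2,3)[of x] g_finite[of x] y_nonneg[of x]
    by (cases "g x") (auto simp: y_def indicator_def cscale_def cone_def)
  moreover have "\<bar>y x\<bar> \<noteq> \<infinity>" for x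
    using g_finite[of x] by (cases "g x") (auto simp: y_def indicator_def)
  ultimately have y: "y \<in> E"
    by (intro in_E_if_dominated[OF cscale_in_E[OF cone_in_E, of c]] Cinf_finiteI)
  have "T (\<lambda>x. g x + y x) = cscale c (indicator W)"
    using T_cscale[OF indicator_in_E[OF W(1,2)], of c] W(3) sum by (simp add: cscale_def)
  then have "T g x0 + T y x0 = 0"
    using T_add_nonneg[OF g(1) y g(2) y_nonneg] x0 by (simp add: cscale_def fun_eq_iff)
  then show ?thesis
    using T_nonneg[OF g(1,2)] T_nonneg[OF y y_nonneg] by (metis add_nonneg_eq_0_iff)
qed

lemma T_vanishes_off_nonneg:
  assumes W: "open W" "closed W" "T (indicator W) = indicator W"
    and g: "g \<in> E" "\<And>x. 0 \<le> g x" "\<And>x. x \<notin> W \<Longrightarrow> g x = 0"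
    and x0: "x0 \<notin> W"
  shows "T g x0 = 0"
proof -
  define g' where "g' m x = min (g x) (ereal (real m))" for m x
  have g'_nonneg: "0 \<le> g' m x" for m x
    using g(2) by (simp add: g'_def)
  have g'_in_E: "g' m \<in> E" for m
  proof (rule in_E_if_dominated[OF g(1) Cinf_finiteI])
    show "continuous_on UNIV (g' m)" unfolding g'_def
      by (intro continuous_on_min continuous_on_const Cinf_continuous in_Cinf g(1))
    show "\<bar>g' m x\<bar> \<noteq> \<infinity>" for x
      using g(2)[of x] by (cases "g x") (auto simp: g'_def min_def)
    show "\<bar>g' m x\<bar> \<le> \<bar>g x\<bar>" for x
      using g(2)[of x] by (cases "g x") (auto simp: g'_def min_def)
  qed
  have T_g: "T g x = T (g' m) x + T (excess g m) x" for m x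
  proof -
    have "(\<lambda>x. g' m x + excess g m x) = g"
      using g(2) by (simp add: fun_eq_iff g'_def min_add_excess)
    then show ?thesis
      using T_add_nonneg[OF g'_in_E[of m] excess_in_E[OF g(1), of m] g'_nonneg[of m] excess_nonneg[of g m]]
      by (simp add: fun_eq_iff)
  qed
  have T_g': "T (g' m) x = 0" if "x \<notin> W" for m x
    using g that by (intro T_vanishes_off_bounded[OF W g'_in_E g'_nonneg, where c = "real m"])
      (auto simp: g'_def)
  define u where "u x = (if x \<in> W then 0 else T g x)" for x
  have "u \<in> E"
  proof (rule in_E_if_dominated[OF T_in_E[OF g(1)]])
    have "continuous_on UNIV u" unfolding u_def
      by (intro continuous_on_If_clopen W(1,2) continuous_on_const Cinf_continuous in_Cinf T_in_E g(1))
    then show "u \<in> Cinf"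
      by (rule Cinf_finite_whereI[OF _ in_Cinf[OF T_in_E[OF g(1)]]]) (auto simp: u_def)
  qed (auto simp: u_def)
  moreover have "u \<le> T (excess g m)" for m
    unfolding le_fun_def u_def
    using T_g[of _ m] T_g'[of _ m] T_nonneg[OF excess_in_E[OF g(1)] excess_nonneg] by simp
  ultimately have "u \<le> czero"
    using glb_T_excess[OF g(1)] unfolding glb_in_def by blast
  then have "u x0 \<le> 0"
    by (simp add: le_fun_def czero_def)
  then have "T g x0 \<le> 0"
    using x0 by (simp add: u_def)
  then show ?thesis
    using T_nonneg[OF g(1,2)] by (simp add: antisym)
qed

lemma positive_part_in_E:
  assumes "g \<in> E"
  shows "(\<lambda>x. max (g x) 0) \<in> E"
proof (rule in_E_if_dominated[OF assms])
  have "continuous_on UNIV (\<lambda>x. max (g x) 0)"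
    by (intro continuous_on_max continuous_on_const Cinf_continuous in_Cinf assms)
  then show "(\<lambda>x. max (g x) 0) \<in> Cinf"
    by (rule Cinf_finite_whereI[OF _ in_Cinf[OF assms]]) (auto simp: max_def)
  show "\<bar>max (g x) 0\<bar> \<le> \<bar>g x\<bar>" for x
    by (cases "g x") (auto simp: max_def)
qed

text \<open>For signed \<open>g\<close> we need the pointwise values of \<open>T g = T g\<^sup>+ - T g\<^sup>-\<close>, which is where
the extremal disconnectedness of the Stone space enters.\<close>

lemma T_vanishes_off:
  assumes K: "extremally_disconnected_space TYPE('a)"
    and W: "open W" "closed W" "T (indicator W) = indicator W"
    and g: "g \<in> E" "\<And>x. x \<notin> W \<Longrightarrow> g x = 0"
    and x0: "x0 \<notin> W"
  shows "T g x0 = 0"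
proof -
  define gp where "gp = (\<lambda>x. max (g x) 0)"
  define gn where "gn = (\<lambda>x. max (cscale (-1) g x) 0)"
  have gp: "gp \<in> E" "\<And>x. 0 \<le> gp x" "\<And>x. x \<notin> W \<Longrightarrow> gp x = 0"
    using positive_part_in_E[OF g(1)] g(2) by (auto simp: gp_def)
  have gn: "gn \<in> E" "\<And>x. 0 \<le> gn x" "\<And>x. x \<notin> W \<Longrightarrow> gn x = 0"
    using positive_part_in_E[OF cscale_in_E[OF g(1)]] g(2) by (auto simp: gn_def cscale_def)
  have "cadd gp (cscale (-1) gn) = g"
    using in_Cinf cscale_in_E gp(1) gn(1) g(1)
  proof (intro cadd_eqI Cinf_continuous)
    show "g x = gp x + cscale (- 1) gn x" for x
      by (cases "g x") (auto simp: gp_def gn_def cscale_def max_def)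
  qed auto
  then have T_g: "T g = cadd (T gp) (cscale (-1) (T gn))"
    using T_cadd[OF gp(1) cscale_in_E[OF gn(1)]] T_cscale[OF gn(1)] by metis
  have Cinf: "T gp \<in> Cinf" "cscale (-1) (T gn) \<in> Cinf"
    using gp(1) gn(1) T_cscale[OF gn(1), of "-1"]
    by (metis T_in_E cscale_in_E in_Cinf)+
  define u where "u x = (if x \<in> W then 0 else T g x)" for x
  have "u = czero"
  proof (rule continuous_eq_on_dense[OF _ _ Cinf_common_finite(2)[OF Cinf]])
    show "continuous_on UNIV u" unfolding u_def T_g
      by (intro continuous_on_If_clopen W(1,2) continuous_on_const continuous_on_cadd[OF K Cinf])
    show "u x = czero x" if "x \<in> {x. \<bar>T gp x\<bar> \<noteq> \<infinity> \<and> \<bar>cscale (-1) (T gn) x\<bar> \<noteq> \<infinity>}" for x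
    proof -
      have "T g x = T gp x + cscale (-1) (T gn) x"
        using that unfolding T_g by (intro cadd_apply[OF K Cinf]) auto
      then show ?thesis
        using T_vanishes_off_nonneg[OF W gp] T_vanishes_off_nonneg[OF W gn]
        by (auto simp: u_def czero_def cscale_def)
    qed
  qed (simp add: czero_def)
  then have "u x0 = 0"
    by (simp add: czero_def)
  then show ?thesis
    using x0 by (simp add: u_def)
qed

lemma T_indicator_diff:
  assumes V: "open V" "closed V" "T (indicator V) = indicator V"
    and W: "open W" "closed W" "T (indicator W) = indicator W"
    and "V \<subseteq> W"
  shows "T (indicator (W - V)) = indicator (W - V)"
proof -
  have V_in_E: "cscale (-1) (indicator V) \<in> E"
    by (intro cscale_in_E indicator_in_E V(1,2))
  have "cadd (indicator W) (cscale (-1) (indicator V)) = indicator (W - V)"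
    using \<open>V \<subseteq> W\<close> V_in_E indicator_in_E[OF W(1,2)] W(1,2) V(1,2)
    by (intro cadd_eqI in_Cinf continuous_on_indicator_clopen)
       (auto simp: cscale_def indicator_def)
  moreover have "T (cadd (indicator W) (cscale (-1) (indicator V))) =
      cadd (indicator W) (cscale (-1) (indicator V))"
    using T_cadd[OF indicator_in_E[OF W(1,2)] V_in_E] T_cscale[OF indicator_in_E[OF V(1,2)]] V(3) W(3)
    by simp
  ultimately show ?thesis by simp
qed

lemma T_indicator_Compl:
  assumes "open W" "closed W" "T (indicator W) = indicator W"
  shows "T (indicator (- W)) = indicator (- W)"
proof -
  have "T (indicator UNIV) = indicator UNIV"
    using T_cone by (simp add: cone_def)
  from T_indicator_diff[OF assms open_UNIV closed_UNIV this subset_UNIV]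
  show ?thesis by (simp add: Compl_eq_Diff_UNIV)
qed

lemma T_cind:
  assumes K: "extremally_disconnected_space TYPE('a)"
    and W: "open W" "closed W" "T (indicator W) = indicator W"
    and f: "f \<in> E"
  shows "T (cind W f) = cind W (T f)"
proof -
  have W': "open (- W)" "closed (- W)" "T (indicator (- W)) = indicator (- W)"
    using W T_indicator_Compl[OF W] by auto
  have in_E: "cind W f \<in> E" "cind (- W) f \<in> E"
    using cind_in_E[OF W(1,2) f] cind_in_E[OF W'(1,2) f] .
  have "cadd (cind W f) (cind (- W) f) = f"
    using in_E f by (intro cadd_eqI in_Cinf Cinf_continuous) (auto simp: cind_If)
  then have T_f: "T f = cadd (T (cind W f)) (T (cind (- W) f))"
    using T_cadd[OF in_E] by metis
  have Cinf: "T (cind W f) \<in> Cinf" "T (cind (- W) f) \<in> Cinf"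
    using in_E by (auto intro: in_Cinf T_in_E)
  have off_W: "T (cind W f) x = 0" if "x \<notin> W" for x
    using in_E(1) that by (intro T_vanishes_off[OF K W]) (auto simp: cind_If)
  have on_W: "T (cind (- W) f) x = 0" if "x \<in> W" for x
    using in_E(2) that by (intro T_vanishes_off[OF K W']) (auto simp: cind_If)
  show ?thesis
  proof (rule continuous_eq_on_dense[OF _ _ Cinf_common_finite(2)[OF Cinf]])
    show "continuous_on UNIV (T (cind W f))" by (rule Cinf_continuous[OF Cinf(1)])
    show "continuous_on UNIV (cind W (T f))"
      using W f by (intro continuous_on_cind Cinf_continuous in_Cinf T_in_E)
    show "T (cind W f) x = cind W (T f) x"
      if "x \<in> {x. \<bar>T (cind W f) x\<bar> \<noteq> \<infinity> \<and> \<bar>T (cind (- W) f) x\<bar> \<noteq> \<infinity>}" for x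
    proof -
      have "T f x = T (cind W f) x + T (cind (- W) f) x"
        using that unfolding T_f by (intro cadd_apply[OF K Cinf]) auto
      then show ?thesis
        using off_W on_W by (cases "x \<in> W") (auto simp: cind_If)
    qed
  qed
qed

end

section \<open>Stopping times\<close>

lemma conditional_expectation_filtration:
  "MO_space E \<Longrightarrow> filtration E F \<Longrightarrow> conditional_expectation E (F i)"
  by (auto simp: filtration_def conditional_expectation_def)

definition first_entry :: "(nat \<Rightarrow> 'a set) \<Rightarrow> 'a \<Rightarrow> ereal" where
  "first_entry W x = (if \<exists>n. x \<in> W n then ereal (real (LEAST n. x \<in> W n)) else \<infinity>)"

lemma first_entry_le_iff:
  assumes "mono W"
  shows "first_entry W x \<le> ereal (real n) \<longleftrightarrow> x \<in> W n"
proof (cases "\<exists>n. x \<in> W n")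
  case True
  then have "x \<in> W (LEAST n. x \<in> W n)" by (rule LeastI_ex)
  then have "(LEAST n. x \<in> W n) \<le> n \<longleftrightarrow> x \<in> W n"
    using assms by (metis Least_le monoD subsetD)
  then show ?thesis using True by (simp add: first_entry_def)
qed (simp add: first_entry_def)

lemma first_entry_cases: "first_entry W x = \<infinity> \<or> (\<exists>n. first_entry W x = ereal (real n))"
  by (auto simp: first_entry_def)

lemma first_entry_ge_1:
  assumes "W 0 = {}"
  shows "first_entry W x = \<infinity> \<or> (\<exists>n::nat. n \<ge> 1 \<and> first_entry W x = ereal (real n))"
proof (cases "\<exists>n. x \<in> W n")
  case True
  then have "x \<in> W (LEAST n. x \<in> W n)" by (rule LeastI_ex)
  then have "(LEAST n. x \<in> W n) \<ge> 1" using assms by (cases "LEAST n. x \<in> W n") auto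
  then show ?thesis using True by (auto simp: first_entry_def)
qed (simp add: first_entry_def)

lemma first_entry_eq_iff:
  assumes "mono W" "W 0 = {}" "n \<ge> 1"
  shows "first_entry W x = ereal (real n) \<longleftrightarrow> x \<in> W n - W (n - 1)"
  using first_entry_ge_1[of W x, OF assms(2)] first_entry_le_iff[OF assms(1), of x n]
    first_entry_le_iff[OF assms(1), of x "n - 1"] assms(3)
  by auto

lemma continuous_on_first_entry:
  assumes W: "mono W" "\<And>n. open (W n)" "\<And>n. closed (W n)"
  shows "continuous_on UNIV (first_entry W)"
proof (rule continuous_on_UNIV_orderI)
  fix a
  have "{x. first_entry W x < a} = (\<Union>n\<in>{n. ereal (real n) < a}. W n)"
  proof (intro set_eqI iffI)
    fix x assume "x \<in> {x. first_entry W x < a}"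
    then obtain n where "first_entry W x = ereal (real n)" "ereal (real n) < a"
      using first_entry_cases[of W x] by auto
    then show "x \<in> (\<Union>n\<in>{n. ereal (real n) < a}. W n)"
      using first_entry_le_iff[OF W(1), of x n] by auto
  next
    fix x assume "x \<in> (\<Union>n\<in>{n. ereal (real n) < a}. W n)"
    then obtain n where "ereal (real n) < a" "x \<in> W n" by auto
    then show "x \<in> {x. first_entry W x < a}"
      using first_entry_le_iff[OF W(1), of x n] by auto
  qed
  then show "open {x. first_entry W x < a}"
    using W(2) by auto
  show "open {x. a < first_entry W x}"
  proof (cases "a = \<infinity>")
    case False
    have "finite {n::nat. ereal (real n) \<le> a}"
    proof (cases a)
      case (real r)
      then have "{n::nat. ereal (real n) \<le> a} \<subseteq> {..nat \<lceil>r\<rceil>}" by auto linarith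
      then show ?thesis by (rule finite_subset) simp
    qed (use False in auto)
    moreover have "{x. a < first_entry W x} = (\<Inter>n\<in>{n. ereal (real n) \<le> a}. - W n)"
    proof (intro set_eqI iffI)
      fix x assume "x \<in> {x. a < first_entry W x}"
      then show "x \<in> (\<Inter>n\<in>{n. ereal (real n) \<le> a}. - W n)"
        using first_entry_le_iff[OF W(1), of x] by force
    next
      fix x assume x: "x \<in> (\<Inter>n\<in>{n. ereal (real n) \<le> a}. - W n)"
      show "x \<in> {x. a < first_entry W x}"
      proof (cases "first_entry W x = \<infinity>")
        case False
        then obtain n where n: "first_entry W x = ereal (real n)"
          using first_entry_cases[of W x] by auto
        then have "x \<in> W n" using first_entry_le_iff[OF W(1), of x n] by simp
        then show ?thesis using x n by (auto simp: not_le)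
      qed (use \<open>a \<noteq> \<infinity>\<close> in \<open>simp add: less_le\<close>)
    qed
    ultimately show ?thesis
      using W(3) by (simp add: open_INT open_Compl)
  qed simp
qed

lemma stopping_time_clopen_sets:
  fixes E :: "('a::t2_space \<Rightarrow> ereal) set"
  assumes E: "MO_space E" and F: "filtration E F" and P: "stopping_time E F P"
  obtains W where "\<And>i. open (W i)" "\<And>i. closed (W i)" "\<And>i f. f \<in> E \<Longrightarrow> P i f = cind (W i) f"
    and "W 0 = {}" and "mono W"
    and "\<And>k n. k \<le> n \<Longrightarrow> F n (indicator (W k)) = indicator (W k)"
proof -
  interpret F0: conditional_expectation E "F 0"
    by (rule conditional_expectation_filtration[OF E F])
  have "\<forall>i. \<exists>W. open W \<and> closed W \<and> (\<forall>f\<in>E. P i f = cind W f)"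
    using P unfolding stopping_time_def band_projection_def by blast
  then obtain W where W: "\<And>i. open (W i)" "\<And>i. closed (W i)" "\<And>i f. f \<in> E \<Longrightarrow> P i f = cind (W i) f"
    by metis
  have P_cone: "P i cone = indicator (W i)" for i
    using W(3)[OF F0.cone_in_E] by (auto simp: cind_def cone_def fun_eq_iff)
  have "(indicator (W 0) :: 'a \<Rightarrow> ereal) = czero"
    using P F0.cone_in_E P_cone unfolding stopping_time_def by metis
  then have W0: "W 0 = {}"
    by (auto simp: czero_def fun_eq_iff indicator_def split: if_splits)
  have mono: "mono W"
  proof (intro monoI subsetI)
    fix i j :: nat and x assume "i \<le> j" "x \<in> W i"
    then have "P i cone \<le> P j cone"
      using P F0.cone_in_E unfolding stopping_time_def by (auto simp: czero_def cone_def le_fun_def)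
    then have "(indicator (W i) x :: ereal) \<le> indicator (W j) x"
      using P_cone by (auto simp: le_fun_def)
    then show "x \<in> W j" using \<open>x \<in> W i\<close> by (cases "x \<in> W j") auto
  qed
  have F_W: "F n (indicator (W k)) = indicator (W k)" if "k \<le> n" for k n
  proof -
    have "F n (P k cone) = P k (F n cone)"
      using P F0.cone_in_E that unfolding stopping_time_def by blast
    then show ?thesis
      using conditional_expectation.T_cone[OF conditional_expectation_filtration[OF E F]] P_cone
      by simp
  qed
  show thesis
    by (rule that[OF W W0 mono F_W])
qed

lemma stopping_time_representation:
  fixes E :: "('a::t2_space \<Rightarrow> ereal) set"
  assumes E: "MO_space E" and F: "filtration E F" and P: "stopping_time E F P"
  shows "\<exists>\<tau>\<in>sup_completion E.
           (\<forall>x. \<tau> x = \<infinity> \<or> (\<exists>n::nat. n \<ge> 1 \<and> \<tau> x = ereal (real n))) \<and>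
           (\<forall>n::nat. n \<ge> 1 \<longrightarrow>
              open {x. \<tau> x = ereal (real n)} \<and> closed {x. \<tau> x = ereal (real n)} \<and>
              indicator {x. \<tau> x = ereal (real n)} \<in> F n ` E) \<and>
           (\<forall>n::nat. \<forall>f\<in>E. P n f = cind {x. \<tau> x \<le> ereal (real n)} f)"
proof -
  obtain W where W: "\<And>i. open (W i)" "\<And>i. closed (W i)" "\<And>i f. f \<in> E \<Longrightarrow> P i f = cind (W i) f"
    and W0: "W 0 = {}" and mono: "mono W"
    and F_W: "\<And>k n. k \<le> n \<Longrightarrow> F n (indicator (W k)) = indicator (W k)"
    using stopping_time_clopen_sets[OF E F P] by metis
  interpret Fn: conditional_expectation E "F n" for n
    by (rule conditional_expectation_filtration[OF E F])
  let ?\<tau> = "first_entry W"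
  have level: "{x. ?\<tau> x = ereal (real n)} = W n - W (n - 1)" if "n \<ge> 1" for n
    using first_entry_eq_iff[OF mono W0 that] by auto
  have \<tau>: "?\<tau> \<in> sup_completion E"
    unfolding sup_completion_def
  proof (intro CollectI conjI bexI[of _ cone])
    show "continuous_on UNIV ?\<tau>"
      using mono W(1,2) by (rule continuous_on_first_entry)
    show "cone \<le> ?\<tau>"
      unfolding le_fun_def cone_def
    proof
      fix x show "1 \<le> ?\<tau> x" using first_entry_ge_1[of W x, OF W0] by auto
    qed
  qed (rule Fn.cone_in_E)
  have measurable: "indicator {x. ?\<tau> x = ereal (real n)} \<in> F n ` E" if "n \<ge> 1" for n
  proof -
    have "F n (indicator (W n - W (n - 1))) = indicator (W n - W (n - 1))"
      using W mono F_W by (intro Fn.T_indicator_diff) (auto simp: monoD)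
    moreover have "indicator (W n - W (n - 1)) \<in> E"
      using W by (intro Fn.indicator_in_E) auto
    ultimately show ?thesis
      unfolding level[OF that] by (metis image_eqI)
  qed
  have sublevel: "{x. ?\<tau> x \<le> ereal (real n)} = W n" for n
    using first_entry_le_iff[OF mono] by auto
  show ?thesis
  proof (intro bexI[OF _ \<tau>] conjI allI impI ballI)
    show "?\<tau> x = \<infinity> \<or> (\<exists>n::nat. n \<ge> 1 \<and> ?\<tau> x = ereal (real n))" for x
      by (rule first_entry_ge_1[of W x, OF W0])
    show "open {x. ?\<tau> x = ereal (real n)}" "closed {x. ?\<tau> x = ereal (real n)}" if "n \<ge> 1" for n
      unfolding level[OF that] using W by auto
    show "indicator {x. ?\<tau> x = ereal (real n)} \<in> F n ` E" if "n \<ge> 1" for n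
      using that by (rule measurable)
    show "P n f = cind {x. ?\<tau> x \<le> ereal (real n)} f" if "f \<in> E" for n f
      unfolding sublevel using that by (rule W(3))
  qed
qed

lemma clopen_sublevel_nat_valued:
  fixes \<tau> :: "'a::topological_space \<Rightarrow> ereal"
  assumes \<tau>: "continuous_on UNIV \<tau>" and vals: "\<And>x. \<tau> x = \<infinity> \<or> (\<exists>n::nat. \<tau> x = ereal (real n))"
  shows "open {x. \<tau> x \<le> ereal (real i)}" and "closed {x. \<tau> x \<le> ereal (real i)}"
proof -
  have "{x. \<tau> x \<le> ereal (real i)} = {x. \<tau> x < ereal (real i + 1/2)}"
  proof (rule set_eqI)
    fix x show "x \<in> {x. \<tau> x \<le> ereal (real i)} \<longleftrightarrow> x \<in> {x. \<tau> x < ereal (real i + 1/2)}"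
      using vals[of x] by auto
  qed
  then show "open {x. \<tau> x \<le> ereal (real i)}"
    using open_Collect_less[OF \<tau> continuous_on_const] by simp
  show "closed {x. \<tau> x \<le> ereal (real i)}"
    by (rule closed_Collect_le[OF \<tau> continuous_on_const])
qed

lemma filtration_absorb:
  "filtration E F \<Longrightarrow> s \<le> t \<Longrightarrow> f \<in> E \<Longrightarrow> F t (F s f) = F s f"
  unfolding filtration_def by metis

lemma filtration_fixes_sublevel_indicator:
  fixes E :: "('a::t2_space \<Rightarrow> ereal) set"
  assumes E: "MO_space E" and F: "filtration E F" and \<tau>: "continuous_on UNIV \<tau>"
    and vals: "\<And>x. \<tau> x = \<infinity> \<or> (\<exists>n::nat. n \<ge> 1 \<and> \<tau> x = ereal (real n))"
    and meas: "\<And>n::nat. n \<ge> 1 \<Longrightarrow> indicator {x. \<tau> x = ereal (real n)} \<in> F n ` E"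
    and "i \<le> j"
  shows "F j (indicator {x. \<tau> x \<le> ereal (real i)}) = indicator {x. \<tau> x \<le> ereal (real i)}"
  using \<open>i \<le> j\<close>
proof (induction i)
  case 0
  have "{x. \<tau> x \<le> ereal (real 0)} = {}"
  proof (rule set_eqI)
    fix x show "x \<in> {x. \<tau> x \<le> ereal (real 0)} \<longleftrightarrow> x \<in> {}"
      using vals[of x] by auto
  qed
  then show ?case
    using conditional_expectation.T_czero[OF conditional_expectation_filtration[OF E F]]
    by (simp add: czero_def[symmetric])
next
  case (Suc i)
  interpret Fn: conditional_expectation E "F n" for n
    by (rule conditional_expectation_filtration[OF E F])
  let ?L = "indicator {x. \<tau> x \<le> ereal (real i)} :: 'a \<Rightarrow> ereal"
  let ?e = "indicator {x. \<tau> x = ereal (real (Suc i))} :: 'a \<Rightarrow> ereal"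
  obtain e where e: "e \<in> E" "?e = F (Suc i) e"
    using meas[of "Suc i"] by auto
  have e_in_E: "?e \<in> E"
    using e Fn.T_in_E by simp
  have F_e: "F j ?e = ?e"
    using e filtration_absorb[OF F Suc.prems] by simp
  have "\<tau> x = \<infinity> \<or> (\<exists>n::nat. \<tau> x = ereal (real n))" for x
    using vals[of x] by auto
  then have L_in_E: "?L \<in> E"
    by (intro Fn.indicator_in_E clopen_sublevel_nat_valued[OF \<tau>])
  have "(\<lambda>x. ?L x + ?e x) = indicator {x. \<tau> x \<le> ereal (real (Suc i))}"
  proof
    fix x show "?L x + ?e x = (indicator {x. \<tau> x \<le> ereal (real (Suc i))} x :: ereal)"
    proof (cases "\<tau> x = \<infinity>")
      case False
      then obtain n :: nat where "\<tau> x = ereal (real n)" using vals[of x] by auto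
      then show ?thesis by (auto simp: indicator_def)
    qed (simp add: indicator_def)
  qed
  moreover have "F j (\<lambda>x. ?L x + ?e x) = (\<lambda>x. ?L x + ?e x)"
    using Fn.T_add_nonneg[OF L_in_E e_in_E] Suc F_e by (simp add: Suc_leD)
  ultimately show ?case by simp
qed

lemma stopping_time_of_representation:
  fixes E :: "('a::t2_space \<Rightarrow> ereal) set"
  assumes K: "extremally_disconnected_space TYPE('a)"
    and E: "MO_space E" and F: "filtration E F"
    and \<tau>: "\<tau> \<in> sup_completion E"
    and vals: "\<And>x. \<tau> x = \<infinity> \<or> (\<exists>n::nat. n \<ge> 1 \<and> \<tau> x = ereal (real n))"
    and meas: "\<And>n::nat. n \<ge> 1 \<Longrightarrow> indicator {x. \<tau> x = ereal (real n)} \<in> F n ` E"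
  shows "stopping_time E F (\<lambda>n f. if n = 0 then czero else cind {x. \<tau> x \<le> ereal (real n)} f)"
proof -
  interpret Fn: conditional_expectation E "F n" for n
    by (rule conditional_expectation_filtration[OF E F])
  define L where "L n = {x. \<tau> x \<le> ereal (real n)}" for n :: nat
  have \<tau>_cont: "continuous_on UNIV \<tau>"
    using \<tau> by (simp add: sup_completion_def)
  have "\<tau> x = \<infinity> \<or> (\<exists>n::nat. \<tau> x = ereal (real n))" for x
    using vals[of x] by auto
  note L_clopen = clopen_sublevel_nat_valued[OF \<tau>_cont this, folded L_def]
  have "L 0 = {}"
  proof -
    have "\<not> \<tau> x \<le> ereal (real 0)" for x using vals[of x] by auto
    then show ?thesis by (simp add: L_def)
  qed
  then have P_eq: "(if n = 0 then czero else cind (L n) f) = cind (L n) f" for n f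
    by (simp add: cind_def czero_def)
  have L_mono: "L i \<subseteq> L j" if "i \<le> j" for i j
    using that by (auto simp: L_def intro: order_trans)
  show ?thesis
    unfolding stopping_time_def L_def[symmetric] P_eq
  proof (intro conjI allI impI ballI)
    show "band_projection E (cind (L i))" for i
      unfolding band_projection_def using L_clopen by blast
    show "cind (L i) f \<le> cind (L j) f" if "i \<le> j \<and> f \<in> E \<and> czero \<le> f" for i j f
      using that L_mono[of i j] by (auto simp: cind_If le_fun_def czero_def)
    show "cind (L 0) f = czero" for f
      using \<open>L 0 = {}\<close> by (simp add: cind_def czero_def)
    show "F j (cind (L i) f) = cind (L i) (F j f)" if "i \<le> j \<and> f \<in> E" for i j f
      using that filtration_fixes_sublevel_indicator[OF E F \<tau>_cont vals meas, of i j]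
      by (intro Fn.T_cind[OF K L_clopen]) (auto simp: L_def)
  qed
qed

theorem mainTheorem12:
  fixes E :: "('k::t2_space \<Rightarrow> ereal) set"
    and F :: "nat \<Rightarrow> ('k \<Rightarrow> ereal) \<Rightarrow> ('k \<Rightarrow> ereal)"
  assumes K: "extremally_disconnected_space TYPE('k)"
    and E: "MO_space E"
    and F: "filtration E F"
  shows "(\<forall>P. stopping_time E F P \<longrightarrow>
            (\<exists>\<tau>\<in>sup_completion E.
               (\<forall>x. \<tau> x = \<infinity> \<or> (\<exists>n::nat. n \<ge> 1 \<and> \<tau> x = ereal (real n))) \<and>
               (\<forall>n::nat. n \<ge> 1 \<longrightarrow>
                  open {x. \<tau> x = ereal (real n)} \<and> closed {x. \<tau> x = ereal (real n)} \<and>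
                  indicator {x. \<tau> x = ereal (real n)} \<in> F n ` E) \<and>
               (\<forall>n::nat. \<forall>f\<in>E. P n f = cind {x. \<tau> x \<le> ereal (real n)} f)))
       \<and>
         (\<forall>\<tau>\<in>sup_completion E.
            (\<forall>x. \<tau> x = \<infinity> \<or> (\<exists>n::nat. n \<ge> 1 \<and> \<tau> x = ereal (real n))) \<and>
            (\<forall>n::nat. n \<ge> 1 \<longrightarrow> indicator {x. \<tau> x = ereal (real n)} \<in> F n ` E)
            \<longrightarrow> stopping_time E F
                  (\<lambda>n f. if n = 0 then czero else cind {x. \<tau> x \<le> ereal (real n)} f))"
  using stopping_time_representation[OF E F] stopping_time_of_representation[OF K E F] by blast

end
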